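(* There exist universal constants $c_1,c_2>0$ such that the following holds. Let $n\ge 2$, let $K_0\in T^n$, and let $M_0=M^*(K_0)>0$. Then there exist a number $N\le c_1 n$ and directions $u_1,\dots,u_N\in S^{n-1}$ such that $K_1:=M_{u_N}\circ\cdots\circ M_{u_1}(K_0)$ satisfies \[ \frac{c_2}{\sqrt n}D_n\subseteq \frac{K_1}{M_0}. \]
   Context: $D_n$ denotes the closed Euclidean unit ball in $\mathbb R^n$ and $S^{n-1}$ the unit sphere. A nonempty compact set $K\subset\mathbb R^n$ is called star shaped if $x\in K$ implies that the segment $[0,x]\subseteq K$; $T^n$ denotes the family of star shaped sets in $\mathbb R^n$. For $u\in S^{n-1}$, $R_u$ denotes the reflection with respect to the hyperplane $u^\perp$, and the Minkowski symmetrization of a set $K$ in direction $u$ is $M_u(K)=\frac{K+R_uK}{2}$ (Minkowski sum; $K$ need not be convex). The support function of a (not necessarily convex) set $K$ is $h_K(u)=\sup\{\langle x,u\rangle: x\in K\}$, and the mean width of $K$ is $M^*(K)=\int_{S^{n-1}}h_K\,d\sigma$, where $\sigma$ is the normalized rotation-invariant (Haar) probability measure on $S^{n-1}$. *)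

theory Defs
  imports "HOL-Analysis.Analysis"
begin

text \<open>Euclidean space R^n is represented inside the fixed type nat => real as the
  functions vanishing at all coordinates >= n (so that the dimension n can be
  quantified inside the statement, after the universal constants).\<close>

definition Rn :: "nat \<Rightarrow> (nat \<Rightarrow> real) set" where
  "Rn n = {x. \<forall>i\<ge>n. x i = 0}"

definition inner_n :: "nat \<Rightarrow> (nat \<Rightarrow> real) \<Rightarrow> (nat \<Rightarrow> real) \<Rightarrow> real" where
  "inner_n n x y = (\<Sum>i<n. x i * y i)"

definition norm_n :: "nat \<Rightarrow> (nat \<Rightarrow> real) \<Rightarrow> real" where
  "norm_n n x = sqrt (inner_n n x x)"

definition scaleV :: "real \<Rightarrow> (nat \<Rightarrow> real) \<Rightarrow> (nat \<Rightarrow> real)" where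
  "scaleV c x = (\<lambda>i. c * x i)"

definition addV :: "(nat \<Rightarrow> real) \<Rightarrow> (nat \<Rightarrow> real) \<Rightarrow> (nat \<Rightarrow> real)" where
  "addV x y = (\<lambda>i. x i + y i)"

definition ball_n :: "nat \<Rightarrow> (nat \<Rightarrow> real) set" where
  "ball_n n = {x \<in> Rn n. norm_n n x \<le> 1}"

definition sphere_n :: "nat \<Rightarrow> (nat \<Rightarrow> real) set" where
  "sphere_n n = {x \<in> Rn n. norm_n n x = 1}"

definition star_shaped_n :: "nat \<Rightarrow> (nat \<Rightarrow> real) set \<Rightarrow> bool" where
  "star_shaped_n n K \<longleftrightarrow> K \<subseteq> Rn n \<and> K \<noteq> {} \<and> compact K \<and>
     (\<forall>x\<in>K. \<forall>t\<in>{0..1}. scaleV t x \<in> K)"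

definition refl_n :: "nat \<Rightarrow> (nat \<Rightarrow> real) \<Rightarrow> (nat \<Rightarrow> real) \<Rightarrow> (nat \<Rightarrow> real)" where
  "refl_n n u x = (\<lambda>i. x i - 2 * inner_n n x u * u i)"

definition mink_sym :: "nat \<Rightarrow> (nat \<Rightarrow> real) \<Rightarrow> (nat \<Rightarrow> real) set \<Rightarrow> (nat \<Rightarrow> real) set" where
  "mink_sym n u K = {scaleV (1/2) (addV x y) | x y. x \<in> K \<and> y \<in> refl_n n u ` K}"

definition support_n :: "nat \<Rightarrow> (nat \<Rightarrow> real) set \<Rightarrow> (nat \<Rightarrow> real) \<Rightarrow> real" where
  "support_n n K u = (SUP x\<in>K. inner_n n x u)"

definition lebesgue_n :: "nat \<Rightarrow> (nat \<Rightarrow> real) measure" where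
  "lebesgue_n n = PiM {..<n} (\<lambda>_. lborel)"

definition ext0 :: "nat \<Rightarrow> (nat \<Rightarrow> real) \<Rightarrow> (nat \<Rightarrow> real)" where
  "ext0 n x = (\<lambda>i. if i < n then x i else 0)"

text \<open>Normalized rotation invariant probability measure sigma on S^{n-1}, realised as the
  cone measure: the image of the normalized Lebesgue measure on the unit ball under the
  radial projection x |-> x/|x|.\<close>
definition sphere_measure :: "nat \<Rightarrow> (nat \<Rightarrow> real) measure" where
  "sphere_measure n =
     distr (uniform_measure (lebesgue_n n)
              {x \<in> space (lebesgue_n n). norm_n n (ext0 n x) \<le> 1})
           (PiM UNIV (\<lambda>_. borel))
           (\<lambda>x. scaleV (1 / norm_n n (ext0 n x)) (ext0 n x))"

definition mean_width :: "nat \<Rightarrow> (nat \<Rightarrow> real) set \<Rightarrow> real" where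
  "mean_width n K = integral\<^sup>L (sphere_measure n) (support_n n K)"

end

theory Submission
  imports Defs
begin

text \<open>Since \<sigma> is a sub-probability measure on the unit ball, M_0 is at most the
  largest norm of a point of K_0, so some x in K_0 has |x| \<ge> M_0/2. One symmetrization,
  in the direction of x - w, reflects x onto a diagonal vector w = (b, ..., b) with
  |w| = |x|; as 0 \<in> K_0, the result contains the segment [0, w/2]. Symmetrizing in the
  coordinate directions e_0, ..., e_(n-1) then turns this segment into the zonotope
  2^-n \<Sum>_\<epsilon> [0, \<epsilon> w/2], \<epsilon> ranging over all sign vectors. Its support function at \<theta>
  is |b|/4 times the mean of |\<Sum>_i \<epsilon>_i \<theta>_i| over \<epsilon>, which by Khintchine's inequality
  (obtained from the second and fourth moments) is at least |b| |\<theta>| / (4 sqrt 3). Hence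
  the zonotope contains the ball of radius |b| / (4 sqrt 3) \<ge> M_0 / (14 sqrt n).\<close>

lemma norm_n_nonneg: "norm_n n x \<ge> 0"
  unfolding norm_n_def inner_n_def by (simp add: sum_nonneg)

lemma norm_n_power2: "(norm_n n x)\<^sup>2 = inner_n n x x"
  unfolding norm_n_def inner_n_def by (simp add: sum_nonneg)

lemma norm_n_scaleV: "norm_n n (scaleV c x) = \<bar>c\<bar> * norm_n n x"
proof -
  have "inner_n n (scaleV c x) (scaleV c x) = c\<^sup>2 * inner_n n x x"
    by (simp add: inner_n_def scaleV_def sum_distrib_left power2_eq_square algebra_simps)
  then show ?thesis by (simp add: norm_n_def real_sqrt_mult)
qed

lemma inner_n_le_norm_n: "inner_n n x y \<le> norm_n n x * norm_n n y"
proof -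
  have "inner_n n x y \<le> (\<Sum>i<n. \<bar>x i\<bar> * \<bar>y i\<bar>)"
    unfolding inner_n_def by (rule sum_mono) (simp add: abs_mult[symmetric])
  also have "\<dots> \<le> L2_set x {..<n} * L2_set y {..<n}" by (rule L2_set_mult_ineq)
  finally show ?thesis by (simp add: norm_n_def inner_n_def L2_set_def power2_eq_square)
qed

lemma norm_n_eq_0_imp:
  assumes "x \<in> Rn n" "norm_n n x = 0" shows "x = (\<lambda>_. 0)"
proof
  fix i
  have "\<forall>i<n. x i * x i = 0"
    using assms(2) unfolding norm_n_def inner_n_def by (simp add: sum_nonneg_eq_0_iff)
  then show "x i = 0" using assms(1) unfolding Rn_def by (cases "i < n") auto
qed

lemma refl_n_scaleV: "refl_n n u (scaleV t x) = scaleV t (refl_n n u x)"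
  unfolding refl_n_def scaleV_def inner_n_def
  by (rule ext) (simp add: sum_distrib_left algebra_simps)

lemma norm_ext0_measurable: "(\<lambda>x. norm_n n (ext0 n x)) \<in> borel_measurable (lebesgue_n n)"
  unfolding norm_n_def inner_n_def ext0_def lebesgue_n_def by measurable

lemma radial_projection_measurable:
  "(\<lambda>x. scaleV (1 / norm_n n (ext0 n x)) (ext0 n x))
     \<in> measurable (uniform_measure (lebesgue_n n) A) (PiM UNIV (\<lambda>_. borel))"
  unfolding measurable_cong_sets[OF sets_uniform_measure refl]
proof (rule measurable_PiM_single')
  fix i :: nat
  show "(\<lambda>x. scaleV (1 / norm_n n (ext0 n x)) (ext0 n x) i) \<in> borel_measurable (lebesgue_n n)"
  proof (cases "i < n")
    case True
    then have "(\<lambda>x. (1 / norm_n n (ext0 n x)) * x i) \<in> borel_measurable (lebesgue_n n)"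
      using norm_ext0_measurable[of n] unfolding lebesgue_n_def by (measurable, simp)
    with True show ?thesis by (simp add: scaleV_def ext0_def)
  qed (simp add: scaleV_def ext0_def)
qed auto

lemma emeasure_sphere_measure_le_1: "emeasure (sphere_measure n) (space (sphere_measure n)) \<le> 1"
proof -
  let ?L = "lebesgue_n n"
  let ?B = "{x \<in> space ?L. norm_n n (ext0 n x) \<le> 1}"
  have B: "?B \<in> sets ?L" using norm_ext0_measurable[of n] by measurable
  have "emeasure (sphere_measure n) (space (sphere_measure n))
      = emeasure (uniform_measure ?L ?B) (space ?L)"
    unfolding sphere_measure_def
    by (subst emeasure_distr[OF radial_projection_measurable])
      (auto simp: space_PiM intro: sets.top[where M="Pi\<^sub>M UNIV (\<lambda>_. borel)", simplified space_PiM, simplified])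
  also have "\<dots> = emeasure ?L (?B \<inter> space ?L) / emeasure ?L ?B"
    using B by simp
  also have "\<dots> \<le> 1"
  proof -
    have "a / a \<le> (1::ennreal)" for a
      by (cases "a = 0") (auto intro!: divide_le_posI_ennreal simp: zero_less_iff_neq_zero)
    then show ?thesis using B by (simp add: sets.Int_space_eq2)
  qed
  finally show ?thesis .
qed

lemma AE_sphere_measure_norm_le_1: "AE u in sphere_measure n. norm_n n u \<le> 1"
  unfolding sphere_measure_def
proof (subst AE_distr_iff[OF radial_projection_measurable])
  show "{x \<in> space (Pi\<^sub>M UNIV (\<lambda>_. borel)). norm_n n x \<le> 1} \<in> sets (Pi\<^sub>M UNIV (\<lambda>_. borel))"
    unfolding norm_n_def inner_n_def by measurable
  show "AE x in uniform_measure (lebesgue_n n) {x \<in> space (lebesgue_n n). norm_n n (ext0 n x) \<le> 1}.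
        norm_n n (scaleV (1 / norm_n n (ext0 n x)) (ext0 n x)) \<le> 1"
  proof (rule AE_I2)
    fix x
    show "norm_n n (scaleV (1 / norm_n n (ext0 n x)) (ext0 n x)) \<le> 1"
      using norm_n_nonneg[of n "ext0 n x"]
      by (cases "norm_n n (ext0 n x) = 0") (auto simp: norm_n_scaleV)
  qed
qed

lemma mean_width_le_radius:
  assumes "K \<noteq> {}" "\<And>x. x \<in> K \<Longrightarrow> norm_n n x \<le> r"
  shows "mean_width n K \<le> r"
proof -
  let ?M = "sphere_measure n"
  have r: "r \<ge> 0" using assms norm_n_nonneg[of n] by (meson ex_in_conv order_trans)
  have support: "support_n n K u \<le> r" if "norm_n n u \<le> 1" for u
    unfolding support_n_def
  proof (rule cSUP_least[OF assms(1)])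
    fix x assume "x \<in> K"
    have "inner_n n x u \<le> norm_n n x * norm_n n u" by (rule inner_n_le_norm_n)
    also have "\<dots> \<le> r * 1"
      using assms(2)[OF \<open>x \<in> K\<close>] that r norm_n_nonneg[of n] by (intro mult_mono) auto
    finally show "inner_n n x u \<le> r" by simp
  qed
  have "finite_measure ?M"
    using emeasure_sphere_measure_le_1[of n] by (intro finite_measureI) (auto simp: top_unique)
  then have "mean_width n K \<le> integral\<^sup>L ?M (\<lambda>_. r)"
    unfolding mean_width_def using AE_sphere_measure_norm_le_1[of n] support r
    by (intro integral_mono_AE') (auto simp: finite_measure.integrable_const elim!: eventually_mono)
  also have "\<dots> = measure ?M (space ?M) * r" by simp
  also have "\<dots> \<le> 1 * r"
    using emeasure_sphere_measure_le_1[of n] r unfolding measure_def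
    by (intro mult_right_mono) (simp_all add: enn2real_leI)
  finally show ?thesis by simp
qed

lemma exists_norm_ge_half_mean_width:
  assumes "K \<noteq> {}" "mean_width n K > 0"
  obtains x where "x \<in> K" "norm_n n x \<ge> mean_width n K / 2"
proof (rule ccontr)
  assume "\<not> thesis"
  with that have "\<And>x. x \<in> K \<Longrightarrow> norm_n n x \<le> mean_width n K / 2" by force
  then have "mean_width n K \<le> mean_width n K / 2" by (rule mean_width_le_radius[OF assms(1)])
  with assms(2) show False by simp
qed

section \<open>Khintchine's inequality\<close>

text \<open>A sign vector \<epsilon> \<in> {-1, 1}^k is encoded by the set A of the coordinates where
  \<epsilon> = -1; then signed_sum k \<theta> A is \<Sum>_(i<k) \<epsilon>_i \<theta>_i.\<close>

definition flip_signs :: "nat set \<Rightarrow> (nat \<Rightarrow> real) \<Rightarrow> nat \<Rightarrow> real" where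
  "flip_signs A v = (\<lambda>i. if i \<in> A then - v i else v i)"

definition signed_sum :: "nat \<Rightarrow> (nat \<Rightarrow> real) \<Rightarrow> nat set \<Rightarrow> real" where
  "signed_sum k \<theta> A = (\<Sum>i<k. flip_signs A \<theta> i)"

lemma sum_Pow_lessThan_Suc:
  "sum g (Pow {..<Suc k}) = (\<Sum>B\<in>Pow {..<k}. g B + g (insert k B))"
proof -
  have "sum g (Pow {..<Suc k}) = sum g (Pow {..<k}) + sum g (insert k ` Pow {..<k})"
    unfolding lessThan_Suc Pow_insert by (rule sum.union_disjoint) auto
  also have "sum g (insert k ` Pow {..<k}) = (\<Sum>B\<in>Pow {..<k}. g (insert k B))"
    by (rule sum.reindex_cong[of "insert k"]) (auto intro!: inj_onI)
  finally show ?thesis by (simp add: sum.distrib)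
qed

lemma signed_sum_Suc:
  assumes "B \<subseteq> {..<k}"
  shows "signed_sum (Suc k) \<theta> B = signed_sum k \<theta> B + \<theta> k"
    and "signed_sum (Suc k) \<theta> (insert k B) = signed_sum k \<theta> B - \<theta> k"
  using assms unfolding signed_sum_def flip_signs_def by (auto intro!: sum.cong)

lemma sum_signed_sum: "(\<Sum>A\<in>Pow {..<k}. signed_sum k \<theta> A) = 0"
proof (induction k)
  case (Suc k)
  then show ?case
    by (simp add: sum_Pow_lessThan_Suc signed_sum_Suc flip: sum_distrib_left)
qed (simp add: signed_sum_def)

lemma sum_signed_sum_power2:
  "(\<Sum>A\<in>Pow {..<k}. (signed_sum k \<theta> A)\<^sup>2) = 2^k * (\<Sum>i<k. (\<theta> i)\<^sup>2)"
proof (induction k)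
  case (Suc k)
  have "(\<Sum>A\<in>Pow {..<Suc k}. (signed_sum (Suc k) \<theta> A)\<^sup>2)
      = (\<Sum>B\<in>Pow {..<k}. 2 * (signed_sum k \<theta> B)\<^sup>2 + 2 * (\<theta> k)\<^sup>2)"
    by (simp add: sum_Pow_lessThan_Suc signed_sum_Suc power2_eq_square algebra_simps)
  with Suc.IH show ?case
    by (simp add: sum.distrib card_Pow flip: sum_distrib_left) (simp add: algebra_simps)
qed (simp add: signed_sum_def)

lemma sum_signed_sum_power4_le:
  "(\<Sum>A\<in>Pow {..<k}. (signed_sum k \<theta> A)^4) \<le> 3 * 2^k * (\<Sum>i<k. (\<theta> i)\<^sup>2)\<^sup>2"
proof (induction k)
  case (Suc k)
  let ?S = "\<Sum>i<k. (\<theta> i)\<^sup>2"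
  have "(\<Sum>A\<in>Pow {..<Suc k}. (signed_sum (Suc k) \<theta> A)^4)
      = (\<Sum>B\<in>Pow {..<k}. 2 * (signed_sum k \<theta> B)^4 + 12 * (\<theta> k)\<^sup>2 * (signed_sum k \<theta> B)\<^sup>2
                            + 2 * (\<theta> k)^4)"
    by (simp add: sum_Pow_lessThan_Suc signed_sum_Suc power2_eq_square power4_eq_xxxx algebra_simps)
  also have "\<dots> = 2 * (\<Sum>B\<in>Pow {..<k}. (signed_sum k \<theta> B)^4) + 12 * (\<theta> k)\<^sup>2 * (2^k * ?S)
                  + 2^Suc k * (\<theta> k)^4"
    by (simp add: sum.distrib card_Pow sum_signed_sum_power2 flip: sum_distrib_left)
  also have "\<dots> \<le> 2 * (3 * 2^k * ?S\<^sup>2) + 12 * (\<theta> k)\<^sup>2 * (2^k * ?S) + 2^Suc k * (\<theta> k)^4"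
    using Suc.IH by simp
  also have "\<dots> \<le> 3 * 2^Suc k * (?S + (\<theta> k)\<^sup>2)\<^sup>2"
  proof -
    have "0 \<le> (2::real)^k * (\<theta> k)^4" by simp
    then show ?thesis by (simp add: power2_eq_square power4_eq_xxxx algebra_simps)
  qed
  finally show ?case by simp
qed (simp add: signed_sum_def)

lemma khintchine_signed_sum:
  "2^k * sqrt (\<Sum>i<k. (\<theta> i)\<^sup>2) \<le> sqrt 3 * (\<Sum>A\<in>Pow {..<k}. \<bar>signed_sum k \<theta> A\<bar>)"
proof (cases "(\<Sum>i<k. (\<theta> i)\<^sup>2) = 0")
  case False
  let ?S = "\<Sum>i<k. (\<theta> i)\<^sup>2"
  let ?X = "signed_sum k \<theta>"
  let ?E = "\<Sum>A\<in>Pow {..<k}. \<bar>?X A\<bar>"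
  have S: "?S > 0" using False by (simp add: less_le sum_nonneg)
  define t where "t = sqrt 3 * sqrt ?S"
  have t: "t > 0" "t\<^sup>2 = 3 * ?S" using S by (simp_all add: t_def power_mult_distrib)
  \<comment> \<open>Summed over all signs, this polynomial bound turns the second and fourth moment
    estimates into a lower bound for the first moment.\<close>
  have pointwise: "3 * t\<^sup>2 * x\<^sup>2 - x^4 \<le> 2 * t^3 * \<bar>x\<bar>" for x :: real
  proof -
    have "0 \<le> \<bar>x\<bar> * (\<bar>x\<bar> - t)\<^sup>2 * (\<bar>x\<bar> + 2 * t)" using t by simp
    then show ?thesis
      by (simp add: power2_eq_square power3_eq_cube power4_eq_xxxx algebra_simps)
  qed
  have "6 * ?S * (2^k * ?S) = 3 * t\<^sup>2 * (2^k * ?S) - 3 * 2^k * ?S\<^sup>2"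
    unfolding t(2) by (simp add: power2_eq_square algebra_simps)
  also have "\<dots> \<le> 3 * t\<^sup>2 * (\<Sum>A\<in>Pow {..<k}. (?X A)\<^sup>2) - (\<Sum>A\<in>Pow {..<k}. (?X A)^4)"
    using sum_signed_sum_power4_le[of k \<theta>] by (simp add: sum_signed_sum_power2)
  also have "\<dots> = (\<Sum>A\<in>Pow {..<k}. 3 * t\<^sup>2 * (?X A)\<^sup>2 - (?X A)^4)"
    by (simp add: sum_subtractf sum_distrib_left)
  also have "\<dots> \<le> (\<Sum>A\<in>Pow {..<k}. 2 * t^3 * \<bar>?X A\<bar>)"
    by (rule sum_mono) (rule pointwise)
  also have "\<dots> = 2 * t * t\<^sup>2 * ?E"
    by (simp add: sum_distrib_left power2_eq_square power3_eq_cube mult.assoc)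
  also have "\<dots> = 6 * ?S * (t * ?E)"
    unfolding t(2) by simp
  finally have "2^k * ?S \<le> t * ?E"
    using S by simp
  then have "sqrt ?S * (2^k * sqrt ?S) \<le> sqrt ?S * (sqrt 3 * ?E)"
    using S by (simp add: t_def mult_ac)
  then show ?thesis
    using S by simp
qed (simp add: sum_nonneg)

section \<open>Zonotopes\<close>

definition lin_comb :: "'a set \<Rightarrow> ('a \<Rightarrow> nat \<Rightarrow> real) \<Rightarrow> ('a \<Rightarrow> real) \<Rightarrow> nat \<Rightarrow> real" where
  "lin_comb P f l = (\<lambda>i. \<Sum>A\<in>P. l A * f A i)"

definition zonotope :: "'a set \<Rightarrow> real \<Rightarrow> ('a \<Rightarrow> nat \<Rightarrow> real) \<Rightarrow> (nat \<Rightarrow> real) set" where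
  "zonotope P c f = lin_comb P f ` {l. \<forall>A. 0 \<le> l A \<and> l A \<le> c}"

lemma nonpos_of_first_variation:
  fixes g q \<epsilon> :: real
  assumes "\<epsilon> > 0" "q \<ge> 0" "\<And>t. 0 < t \<Longrightarrow> t \<le> \<epsilon> \<Longrightarrow> 2 * t * g \<le> t\<^sup>2 * q"
  shows "g \<le> 0"
proof (rule ccontr)
  assume "\<not> g \<le> 0"
  define t where "t = min \<epsilon> (g / (q + 1))"
  have t: "t > 0" "t \<le> \<epsilon>" using assms \<open>\<not> g \<le> 0\<close> by (simp_all add: t_def)
  have "2 * g \<le> t * q"
    using assms(3)[OF t] t by (simp add: power2_eq_square)
  also have "\<dots> \<le> g / (q + 1) * q"
    using assms(2) by (intro mult_right_mono) (simp_all add: t_def)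
  also have "\<dots> < g"
    using assms(2) \<open>\<not> g \<le> 0\<close> by (simp add: field_simps)
  finally show False using \<open>\<not> g \<le> 0\<close> by simp
qed

lemma complementary_slackness:
  fixes x c g q :: real
  assumes "0 \<le> x" "x \<le> c" "q \<ge> 0"
    and "\<And>t. 0 \<le> x + t \<Longrightarrow> x + t \<le> c \<Longrightarrow> 2 * t * g \<le> t\<^sup>2 * q"
  shows "x * g = c * max 0 g"
proof -
  have "g \<le> 0" if "x < c"
    using that assms by (intro nonpos_of_first_variation[of "c - x" q]) auto
  moreover have "- g \<le> 0" if "x > 0"
  proof (rule nonpos_of_first_variation[of x q])
    fix t assume "0 < t" "t \<le> x"
    with assms(2) have "2 * (- t) * g \<le> (- t)\<^sup>2 * q" by (intro assms(4)) auto
    then show "2 * t * - g \<le> t\<^sup>2 * q" by simp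
  qed (use that assms in auto)
  ultimately show ?thesis
    using assms(1,2) by (cases g "0::real" rule: linorder_cases) (force simp: max_def)+
qed

lemma lin_comb_fun_upd:
  assumes "finite P" "A \<in> P"
  shows "lin_comb P f (l(A := x)) i = lin_comb P f l i + (x - l A) * f A i"
proof -
  have "(\<Sum>B\<in>P - {A}. (l(A := x)) B * f B i) = (\<Sum>B\<in>P - {A}. l B * f B i)"
    by (rule sum.cong) auto
  with assms show ?thesis
    unfolding lin_comb_def by (simp add: sum.remove[of P A] algebra_simps)
qed

lemma exists_nearest_point_zonotope:
  assumes "c \<ge> 0"
  obtains l where "\<forall>A. 0 \<le> l A \<and> l A \<le> c"
    "\<And>l'. \<forall>A. 0 \<le> l' A \<and> l' A \<le> c \<Longrightarrow>
       (\<Sum>i<n. (z i - lin_comb P f l i)\<^sup>2) \<le> (\<Sum>i<n. (z i - lin_comb P f l' i)\<^sup>2)"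
proof -
  define C where "C = {l :: 'a \<Rightarrow> real. \<forall>A. 0 \<le> l A \<and> l A \<le> c}"
  have "C = PiE UNIV (\<lambda>_. {0..c})"
    unfolding C_def PiE_def Pi_def extensional_def by auto
  moreover have "compactin (product_topology (\<lambda>_. euclidean) UNIV) (PiE UNIV (\<lambda>_::'a. {0..c}))"
    by (simp add: compactin_PiE)
  ultimately have compact: "compact C" by (simp add: euclidean_product_topology)
  have nonempty: "C \<noteq> {}" using assms unfolding C_def by (auto intro!: exI[of _ "\<lambda>_. 0"])
  have continuous: "continuous_on C (\<lambda>l. \<Sum>i<n. (z i - lin_comb P f l i)\<^sup>2)"
  proof -
    have "continuous_on C (\<lambda>l. l A)" for A
      by (rule continuous_on_subset[OF continuous_on_product_coordinates]) simp
    then show ?thesis unfolding lin_comb_def by (intro continuous_intros)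
  qed
  from continuous_attains_inf[OF compact nonempty continuous] that show thesis
    unfolding C_def by blast
qed

text \<open>l describes the point p of the zonotope nearest to z, and the first-order optimality
  conditions give \<open><p, z - p> = h(z - p)\<close>, where \<open>h(\<theta>) = c \<Sum>_A max 0 <f A, \<theta>>\<close> is the
  support function of the zonotope.\<close>
lemma zonotope_nearest_point:
  assumes "finite P" "c \<ge> 0"
  obtains l where "\<forall>A. 0 \<le> l A \<and> l A \<le> c"
    "inner_n n (lin_comb P f l) (\<lambda>i. z i - lin_comb P f l i)
       = c * (\<Sum>A\<in>P. max 0 (inner_n n (f A) (\<lambda>i. z i - lin_comb P f l i)))"
proof -
  obtain l where l: "\<forall>A. 0 \<le> l A \<and> l A \<le> c" and lmin: "\<And>l'. \<forall>A. 0 \<le> l' A \<and> l' A \<le> c \<Longrightarrow>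
       (\<Sum>i<n. (z i - lin_comb P f l i)\<^sup>2) \<le> (\<Sum>i<n. (z i - lin_comb P f l' i)\<^sup>2)"
    using exists_nearest_point_zonotope[OF assms(2), where n = n and z = z and P = P and f = f] by blast
  define p where "p = lin_comb P f l"
  define \<theta> where "\<theta> = (\<lambda>i. z i - p i)"
  define g where "g = (\<lambda>A. inner_n n (f A) \<theta>)"
  have variation: "2 * t * g A \<le> t\<^sup>2 * inner_n n (f A) (f A)"
    if "A \<in> P" "0 \<le> l A + t" "l A + t \<le> c" for A t
  proof -
    have expand: "(\<Sum>i<n. (z i - lin_comb P f (l(A := l A + t)) i)\<^sup>2)
        = (\<Sum>i<n. (z i - p i)\<^sup>2) - 2 * t * g A + t\<^sup>2 * inner_n n (f A) (f A)"
      unfolding lin_comb_fun_upd[OF assms(1) that(1)] g_def inner_n_def \<theta>_def p_def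
      by (simp add: power2_eq_square algebra_simps sum.distrib sum_subtractf sum_distrib_left)
    have "\<forall>B. 0 \<le> (l(A := l A + t)) B \<and> (l(A := l A + t)) B \<le> c"
      using l that(2,3) by simp
    from lmin[OF this] show ?thesis using expand unfolding p_def by linarith
  qed
  have q: "inner_n n (f A) (f A) \<ge> 0" for A
    unfolding inner_n_def by (simp add: sum_nonneg)
  have "l A * g A = c * max 0 (g A)" if "A \<in> P" for A
    using l q variation[OF that]
    by (intro complementary_slackness[where q = "inner_n n (f A) (f A)"]) auto
  then have "inner_n n p \<theta> = c * (\<Sum>A\<in>P. max 0 (g A))"
    unfolding p_def lin_comb_def g_def inner_n_def sum_distrib_right sum_distrib_left
    by (subst sum.swap) (simp add: mult.assoc)
  with l show thesis
    using that[of l] unfolding p_def \<theta>_def g_def by blast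
qed

lemma ball_subset_zonotope:
  assumes "finite P" "c \<ge> 0" "\<And>A. A \<in> P \<Longrightarrow> f A \<in> Rn n"
    and support: "\<And>\<theta>. r * norm_n n \<theta> \<le> c * (\<Sum>A\<in>P. max 0 (inner_n n (f A) \<theta>))"
    and "z \<in> Rn n" "norm_n n z \<le> r"
  shows "z \<in> zonotope P c f"
proof -
  obtain l where l: "\<forall>A. 0 \<le> l A \<and> l A \<le> c" and
    nearest: "inner_n n (lin_comb P f l) (\<lambda>i. z i - lin_comb P f l i)
       = c * (\<Sum>A\<in>P. max 0 (inner_n n (f A) (\<lambda>i. z i - lin_comb P f l i)))"
    using zonotope_nearest_point[OF assms(1,2)] .
  define p where "p = lin_comb P f l"
  define \<theta> where "\<theta> = (\<lambda>i. z i - p i)"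
  have "(norm_n n \<theta>)\<^sup>2 = inner_n n z \<theta> - inner_n n p \<theta>"
    unfolding norm_n_power2 inner_n_def \<theta>_def by (simp add: left_diff_distrib sum_subtractf)
  also have "\<dots> \<le> norm_n n z * norm_n n \<theta> - r * norm_n n \<theta>"
    using inner_n_le_norm_n[of n z \<theta>] support[of \<theta>] nearest unfolding p_def \<theta>_def by linarith
  also have "\<dots> \<le> 0"
    using mult_right_mono[OF \<open>norm_n n z \<le> r\<close> norm_n_nonneg[of n \<theta>]] by simp
  finally have "norm_n n \<theta> = 0" by simp
  moreover have "\<theta> \<in> Rn n"
    using assms(3,5) unfolding \<theta>_def p_def lin_comb_def Rn_def by simp
  ultimately have "\<theta> = (\<lambda>_. 0)" by (intro norm_n_eq_0_imp)
  then have "z = p" by (simp add: \<theta>_def fun_eq_iff)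
  with l show ?thesis unfolding zonotope_def p_def by blast
qed

definition sign_zonotope :: "nat \<Rightarrow> (nat \<Rightarrow> real) \<Rightarrow> (nat \<Rightarrow> real) set" where
  "sign_zonotope k v = zonotope (Pow {..<k}) (1 / 2^k) (\<lambda>A. flip_signs A v)"

lemma support_sign_zonotope_ge:
  assumes "\<And>i. i < n \<Longrightarrow> v i = a"
  shows "\<bar>a\<bar> / (2 * sqrt 3) * norm_n n \<theta>
           \<le> 1 / 2^n * (\<Sum>A\<in>Pow {..<n}. max 0 (inner_n n (flip_signs A v) \<theta>))"
proof -
  let ?E = "\<Sum>A\<in>Pow {..<n}. \<bar>signed_sum n \<theta> A\<bar>"
  have inner: "inner_n n (flip_signs A v) \<theta> = a * signed_sum n \<theta> A" for A
    unfolding inner_n_def signed_sum_def flip_signs_def sum_distrib_left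
    by (rule sum.cong) (simp_all add: assms)
  have max: "max 0 (a * x) = (\<bar>a\<bar> * \<bar>x\<bar> + a * x) / 2" for x :: real
    by (simp add: max_def abs_mult abs_if zero_le_mult_iff)
  have "\<bar>a\<bar> / (2 * sqrt 3) * norm_n n \<theta> = \<bar>a\<bar> / (2 * sqrt 3) * (2^n * norm_n n \<theta>) / 2^n"
    by simp
  also have "\<dots> \<le> \<bar>a\<bar> / (2 * sqrt 3) * (sqrt 3 * ?E) / 2^n"
    using khintchine_signed_sum[of n \<theta>]
    by (intro divide_right_mono mult_left_mono) (simp_all add: norm_n_def inner_n_def power2_eq_square)
  also have "\<dots> = 1 / 2^n * ((\<bar>a\<bar> * ?E + a * (\<Sum>A\<in>Pow {..<n}. signed_sum n \<theta> A)) / 2)"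
    by (simp add: sum_signed_sum)
  also have "\<dots> = 1 / 2^n * (\<Sum>A\<in>Pow {..<n}. max 0 (inner_n n (flip_signs A v) \<theta>))"
    by (simp add: inner max sum.distrib sum_distrib_left sum_divide_distrib[symmetric])
  finally show ?thesis .
qed

lemma ball_subset_sign_zonotope:
  assumes "\<And>i. i < n \<Longrightarrow> v i = a" "\<And>i. i \<ge> n \<Longrightarrow> v i = 0"
    and "z \<in> Rn n" "norm_n n z \<le> \<bar>a\<bar> / (2 * sqrt 3)"
  shows "z \<in> sign_zonotope n v"
  unfolding sign_zonotope_def
proof (rule ball_subset_zonotope[OF _ _ _ support_sign_zonotope_ge assms(3,4)])
  show "flip_signs A v \<in> Rn n" for A
    using assms(2) by (simp add: Rn_def flip_signs_def)
qed (simp_all add: assms(1))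

section \<open>Minkowski symmetrizations\<close>

lemma mink_sym_mono: "K \<subseteq> K' \<Longrightarrow> mink_sym n u K \<subseteq> mink_sym n u K'"
  unfolding mink_sym_def by blast

definition unit_vec :: "nat \<Rightarrow> nat \<Rightarrow> real" where
  "unit_vec k = (\<lambda>i. if i = k then 1 else 0)"

lemma unit_vec_in_sphere_n: "k < n \<Longrightarrow> unit_vec k \<in> sphere_n n"
  by (simp add: sphere_n_def Rn_def norm_n_def inner_n_def unit_vec_def if_distrib cong: if_cong)

lemma refl_n_unit_vec: "k < n \<Longrightarrow> refl_n n (unit_vec k) x = (\<lambda>i. (if i = k then -1 else 1) * x i)"
  by (auto simp: refl_n_def inner_n_def unit_vec_def if_distrib cong: if_cong)

lemma sign_zonotope_0: "sign_zonotope 0 v = (\<lambda>t. scaleV t v) ` {0..1}"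
proof -
  have "lin_comb (Pow {..<0}) (\<lambda>A. flip_signs A v) l = scaleV (l {}) v" for l
    by (simp add: lin_comb_def flip_signs_def scaleV_def)
  then show ?thesis
    unfolding sign_zonotope_def zonotope_def by (force intro: image_eqI[of _ _ "\<lambda>_. _"])
qed

lemma sign_zonotope_Suc_subset:
  assumes "k < n"
  shows "sign_zonotope (Suc k) v \<subseteq> mink_sym n (unit_vec k) (sign_zonotope k v)"
proof
  fix z assume "z \<in> sign_zonotope (Suc k) v"
  then obtain l where l: "\<forall>A. 0 \<le> l A \<and> l A \<le> 1 / 2^Suc k"
    and z: "z = lin_comb (Pow {..<Suc k}) (\<lambda>A. flip_signs A v) l"
    unfolding sign_zonotope_def zonotope_def by blast
  \<comment> \<open>The sign patterns with a minus sign at k are the reflections in the hyperplane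
    orthogonal to e_k of those without.\<close>
  define p where "p = lin_comb (Pow {..<k}) (\<lambda>A. flip_signs A v) (\<lambda>B. 2 * l B)"
  define q where "q = lin_comb (Pow {..<k}) (\<lambda>A. flip_signs A v) (\<lambda>B. 2 * l (insert k B))"
  have "p \<in> sign_zonotope k v" "q \<in> sign_zonotope k v"
    unfolding sign_zonotope_def zonotope_def p_def q_def using l
    by (auto intro!: imageI simp: field_simps)
  moreover have "z = scaleV (1/2) (addV p (refl_n n (unit_vec k) q))"
  proof
    fix i
    let ?s = "if i = k then -1 else 1 :: real"
    have "z i = (\<Sum>B\<in>Pow {..<k}. l B * flip_signs B v i)
              + (\<Sum>B\<in>Pow {..<k}. l (insert k B) * flip_signs (insert k B) v i)"
      by (simp add: z lin_comb_def sum_Pow_lessThan_Suc sum.distrib)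
    also have "(\<Sum>B\<in>Pow {..<k}. l (insert k B) * flip_signs (insert k B) v i)
        = ?s * (\<Sum>B\<in>Pow {..<k}. l (insert k B) * flip_signs B v i)"
      unfolding sum_distrib_left by (rule sum.cong) (auto simp: flip_signs_def)
    also have "(\<Sum>B\<in>Pow {..<k}. l B * flip_signs B v i) + \<dots>
        = scaleV (1/2) (addV p (refl_n n (unit_vec k) q)) i"
      using assms
      by (simp add: p_def q_def lin_comb_def refl_n_unit_vec scaleV_def addV_def mult.assoc
          flip: sum_distrib_left)
    finally show "z i = scaleV (1/2) (addV p (refl_n n (unit_vec k) q)) i" .
  qed
  ultimately show "z \<in> mink_sym n (unit_vec k) (sign_zonotope k v)"
    unfolding mink_sym_def by blast
qed

lemma sign_zonotope_subset_foldl: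
  assumes "k \<le> n" "sign_zonotope 0 v \<subseteq> K"
  shows "sign_zonotope k v \<subseteq> foldl (\<lambda>K u. mink_sym n u K) K (map unit_vec [0..<k])"
  using assms(1)
proof (induction k)
  case (Suc k)
  then have "sign_zonotope (Suc k) v \<subseteq> mink_sym n (unit_vec k) (sign_zonotope k v)"
    by (intro sign_zonotope_Suc_subset) simp
  also have "\<dots> \<subseteq> mink_sym n (unit_vec k) (foldl (\<lambda>K u. mink_sym n u K) K (map unit_vec [0..<k]))"
    using Suc by (intro mink_sym_mono) simp
  finally show ?case by simp
qed (use assms(2) in simp)

lemma exists_refl_n_onto:
  assumes "x \<in> Rn n" "w \<in> Rn n" "norm_n n x = norm_n n w" "x \<noteq> w"
  obtains u where "u \<in> sphere_n n" "refl_n n u x = w"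
proof -
  define d where "d = (\<lambda>i. x i - w i)"
  define D where "D = norm_n n d"
  have d: "d \<in> Rn n" using assms(1,2) by (simp add: Rn_def d_def)
  have "D \<noteq> 0"
  proof
    assume "D = 0"
    then have "d = (\<lambda>_. 0)" using norm_n_eq_0_imp[OF d] unfolding D_def by simp
    with assms(4) show False by (simp add: d_def fun_eq_iff)
  qed
  then have D: "D > 0" using norm_n_nonneg[of n d] unfolding D_def by linarith
  define u where "u = scaleV (1/D) d"
  have "u \<in> sphere_n n"
    using d D by (simp add: sphere_n_def u_def norm_n_scaleV D_def) (simp add: Rn_def scaleV_def)
  moreover have "refl_n n u x = w"
  proof -
    have "inner_n n x x = inner_n n w w"
      using assms(3) by (metis norm_n_power2)
    then have D2: "D\<^sup>2 = 2 * inner_n n x d"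
      unfolding D_def norm_n_power2 inner_n_def d_def
      by (simp add: algebra_simps sum.distrib sum_subtractf sum_distrib_left)
    have "inner_n n x u = inner_n n x d / D"
      unfolding u_def inner_n_def scaleV_def by (simp add: sum_divide_distrib)
    then have "2 * inner_n n x u * u i = D\<^sup>2 / (D * D) * d i" for i
      by (simp add: D2 u_def scaleV_def)
    then have "2 * inner_n n x u * u i = d i" for i
      using D by (simp add: power2_eq_square)
    then show ?thesis unfolding refl_n_def d_def by simp
  qed
  ultimately show thesis by (rule that)
qed

lemma segment_subset_mink_sym:
  assumes "\<And>t. t \<in> {0..1} \<Longrightarrow> scaleV t x \<in> K" "refl_n n u x = w"
  shows "(\<lambda>t. scaleV t (scaleV (1/2) w)) ` {0..1} \<subseteq> mink_sym n u K"
proof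
  fix y assume "y \<in> (\<lambda>t. scaleV t (scaleV (1/2) w)) ` {0..1}"
  then obtain t where t: "t \<in> {0..1}" and y: "y = scaleV t (scaleV (1/2) w)" by blast
  have "y = scaleV (1/2) (addV (scaleV 0 x) (refl_n n u (scaleV t x)))"
    unfolding y refl_n_scaleV assms(2) by (simp add: scaleV_def addV_def)
  moreover have "scaleV 0 x \<in> K" "scaleV t x \<in> K" using assms(1) t by auto
  ultimately show "y \<in> mink_sym n u K" unfolding mink_sym_def by blast
qed

lemma norm_n_diagonal: "norm_n n (\<lambda>i. if i < n then b else 0) = \<bar>b\<bar> * sqrt (real n)"
  by (simp add: norm_n_def inner_n_def real_sqrt_mult mult.commute)

lemma exists_diagonal_vector_ne:
  fixes c :: real and x :: "nat \<Rightarrow> real"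
  assumes "n > 0" "c > 0"
  obtains b where "\<bar>b\<bar> = c" "(\<lambda>i. if i < n then b else 0) \<noteq> x"
proof (cases "(\<lambda>i. if i < n then c else 0) = x")
  case True
  then have "x 0 = c" using assms(1) by force
  have "(\<lambda>i. if i < n then - c else 0) \<noteq> x"
  proof
    assume "(\<lambda>i. if i < n then - c else 0) = x"
    then have "x 0 = - c" using assms(1) by force
    with \<open>x 0 = c\<close> assms(2) show False by simp
  qed
  with assms show thesis by (intro that[of "- c"]) auto
next
  case False
  with assms show thesis by (intro that[of c]) auto
qed

lemma mink_sym_contains_diagonal_segment:
  assumes "n > 0" "star_shaped_n n K" "x \<in> K" "norm_n n x > 0"
  obtains u b where "u \<in> sphere_n n" "\<bar>b\<bar> = norm_n n x / sqrt (real n)"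
    "sign_zonotope 0 (\<lambda>i. if i < n then b / 2 else 0) \<subseteq> mink_sym n u K"
proof -
  have "norm_n n x / sqrt (real n) > 0" using assms(1,4) by simp
  then obtain b where b: "\<bar>b\<bar> = norm_n n x / sqrt (real n)" "(\<lambda>i. if i < n then b else 0) \<noteq> x"
    using exists_diagonal_vector_ne[OF assms(1)] by blast
  define w where "w = (\<lambda>i. if i < n then b else 0)"
  have "x \<in> Rn n" "w \<in> Rn n" "norm_n n x = norm_n n w"
    using assms b(1) by (auto simp: star_shaped_n_def w_def Rn_def norm_n_diagonal)
  then obtain u where u: "u \<in> sphere_n n" "refl_n n u x = w"
    using exists_refl_n_onto b(2) unfolding w_def by blast
  have "(\<lambda>i. if i < n then b / 2 else 0) = scaleV (1/2) w"
    by (simp add: w_def scaleV_def fun_eq_iff)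
  moreover have "(\<lambda>t. scaleV t (scaleV (1/2) w)) ` {0..1} \<subseteq> mink_sym n u K"
    using assms(2,3) u(2) by (intro segment_subset_mink_sym) (auto simp: star_shaped_n_def)
  ultimately show thesis
    using that[OF u(1) b(1)] by (simp add: sign_zonotope_0)
qed

lemma mink_sym_iterates_contain_ball:
  assumes "n > 0" "star_shaped_n n K0" "mean_width n K0 > 0"
  obtains us where "length us = Suc n" "set us \<subseteq> sphere_n n"
    "\<And>z. z \<in> Rn n \<Longrightarrow> norm_n n z \<le> mean_width n K0 / (14 * sqrt (real n))
       \<Longrightarrow> z \<in> foldl (\<lambda>K u. mink_sym n u K) K0 us"
proof -
  let ?M = "mean_width n K0"
  obtain x where x: "x \<in> K0" "norm_n n x \<ge> ?M / 2"
    using assms(2,3) exists_norm_ge_half_mean_width unfolding star_shaped_n_def by metis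
  then obtain u0 b where u0: "u0 \<in> sphere_n n" and b: "\<bar>b\<bar> = norm_n n x / sqrt (real n)"
    and "sign_zonotope 0 (\<lambda>i. if i < n then b / 2 else 0) \<subseteq> mink_sym n u0 K0"
    using mink_sym_contains_diagonal_segment[OF assms(1,2)] assms(3) by (metis half_gt_zero order_less_le_trans)
  then have zonotope: "sign_zonotope n (\<lambda>i. if i < n then b / 2 else 0)
      \<subseteq> foldl (\<lambda>K u. mink_sym n u K) K0 (u0 # map unit_vec [0..<n])"
    using sign_zonotope_subset_foldl[of n n] by simp
  have "sqrt 3 \<le> 7/4" by (rule real_le_lsqrt) (auto simp: power2_eq_square)
  then have "?M * (4 * sqrt 3) \<le> (2 * norm_n n x) * 7"
    using x(2) assms(3) by (intro mult_mono) auto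
  then have "?M / 14 / sqrt (real n) \<le> norm_n n x / (4 * sqrt 3) / sqrt (real n)"
    by (intro divide_right_mono) (simp_all add: field_simps)
  also have "\<dots> = \<bar>b / 2\<bar> / (2 * sqrt 3)"
    using b by simp
  finally have radius: "?M / (14 * sqrt (real n)) \<le> \<bar>b / 2\<bar> / (2 * sqrt 3)"
    by simp
  show thesis
  proof (rule that[of "u0 # map unit_vec [0..<n]"])
    show "set (u0 # map unit_vec [0..<n]) \<subseteq> sphere_n n"
      using u0 unit_vec_in_sphere_n by auto
    fix z assume "z \<in> Rn n" "norm_n n z \<le> ?M / (14 * sqrt (real n))"
    with radius have "z \<in> sign_zonotope n (\<lambda>i. if i < n then b / 2 else 0)"
      by (intro ball_subset_sign_zonotope[where a = "b / 2"]) auto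
    with zonotope show "z \<in> foldl (\<lambda>K u. mink_sym n u K) K0 (u0 # map unit_vec [0..<n])"
      by blast
  qed simp
qed

lemma scaleV_ball_n_subset:
  assumes "M > 0" "r \<ge> 0" "\<And>z. z \<in> Rn n \<Longrightarrow> norm_n n z \<le> M * r \<Longrightarrow> z \<in> K"
  shows "scaleV r ` ball_n n \<subseteq> scaleV (1 / M) ` K"
proof
  fix y assume "y \<in> scaleV r ` ball_n n"
  then obtain z where z: "z \<in> ball_n n" and y: "y = scaleV r z" by blast
  have "scaleV M y \<in> K"
  proof (rule assms(3))
    show "scaleV M y \<in> Rn n" using z by (simp add: y ball_n_def Rn_def scaleV_def)
    show "norm_n n (scaleV M y) \<le> M * r"
      using z assms(1,2) by (simp add: y norm_n_scaleV ball_n_def mult_left_le)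
  qed
  moreover have "y = scaleV (1 / M) (scaleV M y)" using assms(1) by (simp add: scaleV_def)
  ultimately show "y \<in> scaleV (1 / M) ` K" by blast
qed

theorem lemma2p1:
  shows "\<exists>c1 c2 :: real. c1 > 0 \<and> c2 > 0 \<and>
    (\<forall>n::nat. \<forall>K0. n \<ge> 2 \<longrightarrow> star_shaped_n n K0 \<longrightarrow> mean_width n K0 > 0 \<longrightarrow>
      (\<exists>us :: (nat \<Rightarrow> real) list.
         real (length us) \<le> c1 * real n \<and> set us \<subseteq> sphere_n n \<and>
         scaleV (c2 / sqrt (real n)) ` ball_n n \<subseteq>
           scaleV (1 / mean_width n K0) ` (foldl (\<lambda>K u. mink_sym n u K) K0 us)))"
proof (rule exI[of _ 2], rule exI[of _ "1/14"], intro conjI allI impI)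
  fix n :: nat and K0 assume n: "n \<ge> 2" and K0: "star_shaped_n n K0" "mean_width n K0 > 0"
  obtain us where length: "length us = Suc n" and directions: "set us \<subseteq> sphere_n n"
    and ball: "\<And>z. z \<in> Rn n \<Longrightarrow> norm_n n z \<le> mean_width n K0 / (14 * sqrt (real n))
       \<Longrightarrow> z \<in> foldl (\<lambda>K u. mink_sym n u K) K0 us"
    using mink_sym_iterates_contain_ball[OF _ K0] n by auto
  have "scaleV (1 / 14 / sqrt (real n)) ` ball_n n
      \<subseteq> scaleV (1 / mean_width n K0) ` foldl (\<lambda>K u. mink_sym n u K) K0 us"
    using K0(2) by (intro scaleV_ball_n_subset ball) simp_all
  moreover have "real (length us) \<le> 2 * real n" using length n by simp
  ultimately show "\<exists>us. real (length us) \<le> 2 * real n \<and> set us \<subseteq> sphere_n n \<and>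
      scaleV (1 / 14 / sqrt (real n)) ` ball_n n
        \<subseteq> scaleV (1 / mean_width n K0) ` foldl (\<lambda>K u. mink_sym n u K) K0 us"
    using directions by blast
qed simp_all

end
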